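(* Let $M,N\in\mathbb{N}^*$ and let $F$ be a set of $M+1$ points of $[0,1]$ whose elements satisfy $\rho_0=0<\rho_1<\dots<\rho_M=1$. Let $X(1/N)=\{t\in\,]0,1]:\ ]t-1/N,t]\cap F=\emptyset\}$. Then \[ \mathrm{card}\Big\{j\in\{1,\dots,N\}:\ \Big]\frac{j-1}{N},\frac jN\Big]\cap F=\emptyset\Big\} = N\,\mathrm{mes}\big(X(1/N)\big)+\sum_{\substack{1\le i\le M\\ \rho_i-\rho_{i-1}\ge 1/N}}\big(\{-N\rho_i\}-\{-N\rho_{i-1}\}\big). \]
   Context: $\mathrm{mes}$ denotes Lebesgue measure and $\{x\}$ the fractional part of the real number $x$. *)

theory Defs
  imports "HOL-Analysis.Analysis"
begin

end

theory Submission imports Defs begin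

text \<open>
  A window \<open>]t - h, t]\<close> with \<open>0 < t \<le> 1\<close> misses \<open>F\<close> exactly when \<open>t\<close> lies in one of the
  intervals \<open>[\<rho>\<^sub>i\<^sub>-\<^sub>1 + h, \<rho>\<^sub>i[\<close>, which are pairwise disjoint. Hence \<open>X(1/N)\<close> is their disjoint
  union, and the counted \<open>j\<close> are those with \<open>j/N\<close> in this union. An interval \<open>[a + 1/N, b[\<close>
  with \<open>a \<ge> 0\<close> contains \<open>\<lceil>Nb\<rceil> - \<lceil>Na\<rceil> - 1\<close> grid points \<open>j/N\<close> when \<open>b - a \<ge> 1/N\<close> and none
  otherwise; writing \<open>\<lceil>z\<rceil> = z + {-z}\<close>, this is \<open>N\<close> times its length plus
  \<open>{-Nb} - {-Na}\<close>. Summing over the gaps gives the formula.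
\<close>

lemma measure_lebesgue_Ico: "measure lebesgue {a..<b::real} = max 0 (b - a)"
  by (cases "a \<le> b") (simp_all add: measure_completion)

lemma emeasure_lebesgue_Ico_finite: "emeasure lebesgue {a..<b::real} \<noteq> \<infinity>"
  by (cases "a \<le> b") (simp_all add: emeasure_completion)

lemma grid_vimage_Ico:
  fixes n :: nat and a b :: real
  assumes "n > 0" "0 \<le> a"
  shows "(\<lambda>j::nat. real j / n) -` {a + 1/n..<b} = {nat \<lceil>n * a\<rceil> + 1..<nat \<lceil>n * b\<rceil>}"
proof -
  have "real j / n \<in> {a + 1/n..<b} \<longleftrightarrow> n * a + 1 \<le> real j \<and> real j < n * b" for j
    using assms(1) by (simp add: pos_le_divide_eq pos_divide_less_eq distrib_left mult.commute)
  moreover have "n * a + 1 \<le> real j \<longleftrightarrow> nat \<lceil>n * a\<rceil> + 1 \<le> j" for j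
  proof -
    have "0 \<le> real n * a" using assms(2) by simp
    then have "0 \<le> \<lceil>n * a\<rceil>" by (metis ceiling_mono ceiling_zero)
    have "n * a + 1 \<le> real j \<longleftrightarrow> n * a \<le> real_of_int (int j - 1)"
      by linarith
    also have "\<dots> \<longleftrightarrow> \<lceil>n * a\<rceil> \<le> int j - 1"
      by (rule ceiling_le_iff[symmetric])
    also have "\<dots> \<longleftrightarrow> nat \<lceil>n * a\<rceil> + 1 \<le> j"
      using \<open>0 \<le> \<lceil>n * a\<rceil>\<close> by linarith
    finally show ?thesis .
  qed
  moreover have "real j < n * b \<longleftrightarrow> j < nat \<lceil>n * b\<rceil>" for j
    by (metis less_ceiling_iff of_int_of_nat_eq zless_nat_eq_int_zless)
  ultimately show ?thesis by auto
qed

lemma card_between_ceilings: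
  fixes x y :: real
  assumes "0 \<le> x"
  shows "real (nat \<lceil>y\<rceil> - (nat \<lceil>x\<rceil> + 1))
    = max 0 (y - x - 1) + (if 1 \<le> y - x then frac (- y) - frac (- x) else 0)"
proof -
  have "int (nat \<lceil>y\<rceil> - (nat \<lceil>x\<rceil> + 1)) = max 0 (\<lceil>y\<rceil> - \<lceil>x\<rceil> - 1)"
    using assms by (simp add: max_def) arith
  then have card: "real (nat \<lceil>y\<rceil> - (nat \<lceil>x\<rceil> + 1)) = max 0 (\<lceil>y\<rceil> - \<lceil>x\<rceil> - 1)"
    by (metis of_int_of_nat_eq of_int_max of_int_0 of_int_diff of_int_1)
  have frac_uminus: "frac (- z) = \<lceil>z\<rceil> - z" for z :: real
    by (simp add: frac_def ceiling_def)
  show ?thesis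
  proof (cases "1 \<le> y - x")
    case True
    then have "\<lceil>x\<rceil> + 1 \<le> \<lceil>y\<rceil>"
      by (metis ceiling_add_one ceiling_mono le_diff_eq add.commute)
    then show ?thesis using True card by (simp add: frac_uminus)
  next
    case False
    then have "\<lceil>y\<rceil> \<le> \<lceil>x\<rceil> + 1"
      by (metis ceiling_add_one ceiling_mono less_eq_real_def add.commute not_le diff_less_eq)
    then show ?thesis using False card by simp
  qed
qed

lemma card_grid_Ico:
  fixes n :: nat and a b :: real
  assumes "n > 0" "0 \<le> a"
  shows "real (card ((\<lambda>j::nat. real j / n) -` {a + 1/n..<b}))
    = n * measure lebesgue {a + 1/n..<b}
      + (if 1/n \<le> b - a then frac (- (n * b)) - frac (- (n * a)) else 0)"
proof -
  have "n * measure lebesgue {a + 1/n..<b} = max 0 (n * (b - a - 1/n))"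
    by (simp add: measure_lebesgue_Ico max_mult_distrib_left diff_diff_eq)
  also have "n * (b - a - 1/n) = n * b - n * a - 1"
    using assms(1) by (simp add: right_diff_distrib)
  finally have "n * measure lebesgue {a + 1/n..<b} = max 0 (n * b - n * a - 1)" .
  moreover have "1/n \<le> b - a \<longleftrightarrow> 1 \<le> n * b - n * a"
    using assms(1) by (subst pos_divide_le_eq) (simp_all add: algebra_simps)
  moreover have "0 \<le> n * a" using assms(2) by simp
  ultimately show ?thesis
    using assms card_between_ceilings[of "n * a" "n * b"] by (simp add: grid_vimage_Ico)
qed

context
  fixes \<rho> :: "nat \<Rightarrow> real" and M :: nat
  assumes increasing: "\<forall>i<M. \<rho> i < \<rho> (Suc i)"
begin

lemma increasing_mono:
  assumes "i \<le> k" "k \<le> M"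
  shows "\<rho> i \<le> \<rho> k"
  by (rule lift_Suc_mono_le_ivl[of "{..<M}"]) (use increasing assms in \<open>auto intro: less_imp_le\<close>)

lemma gaps_disjoint:
  assumes "0 \<le> h"
  shows "disjoint_family_on (\<lambda>i. {\<rho> (i - 1) + h..<\<rho> i}) {1..M}"
proof -
  have disjoint_if_less: "{\<rho> (i - 1) + h..<\<rho> i} \<inter> {\<rho> (k - 1) + h..<\<rho> k} = {}"
    if "i < k" "k \<le> M" for i k
  proof -
    have "\<rho> i \<le> \<rho> (k - 1)" using that by (intro increasing_mono) auto
    then show ?thesis using assms by auto
  qed
  show ?thesis
  proof (unfold disjoint_family_on_def, intro ballI impI)
    fix i k assume "i \<in> {1..M}" "k \<in> {1..M}" "i \<noteq> k"
    then consider "i < k" "k \<le> M" | "k < i" "i \<le> M" by fastforce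
    then show "{\<rho> (i - 1) + h..<\<rho> i} \<inter> {\<rho> (k - 1) + h..<\<rho> k} = {}"
      by cases (use disjoint_if_less in \<open>auto simp: Int_commute\<close>)
  qed
qed

lemma gaps_subset: "(\<Union>i\<in>{1..M}. {\<rho> (i - 1) + h..<\<rho> i}) \<subseteq> {\<rho> 0 + h..<\<rho> M}"
proof
  fix t assume "t \<in> (\<Union>i\<in>{1..M}. {\<rho> (i - 1) + h..<\<rho> i})"
  then obtain i where "i \<in> {1..M}" "\<rho> (i - 1) + h \<le> t" "t < \<rho> i" by auto
  moreover from \<open>i \<in> {1..M}\<close> have "\<rho> 0 \<le> \<rho> (i - 1)" "\<rho> i \<le> \<rho> M"
    by (auto intro: increasing_mono)
  ultimately show "t \<in> {\<rho> 0 + h..<\<rho> M}" by auto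
qed

lemma window_disjoint_iff_in_gap:
  assumes "0 < h" "\<rho> 0 < t" "t \<le> \<rho> M"
  shows "{t - h<..t} \<inter> \<rho> ` {0..M} = {} \<longleftrightarrow> t \<in> (\<Union>i\<in>{1..M}. {\<rho> (i - 1) + h..<\<rho> i})"
proof
  assume "{t - h<..t} \<inter> \<rho> ` {0..M} = {}"
  then have outside: "\<rho> k \<notin> {t - h<..t}" if "k \<le> M" for k
    using that by auto
  define i where "i = (LEAST i. t \<le> \<rho> i)"
  have "i \<le> M" and "t \<le> \<rho> i"
    unfolding i_def using assms(3) by (auto intro: Least_le LeastI)
  moreover have "i \<noteq> 0"
    using \<open>t \<le> \<rho> i\<close> assms(2) by (metis not_le)
  moreover have "\<rho> (i - 1) < t"
    using not_less_Least[of "i - 1" "\<lambda>i. t \<le> \<rho> i"] \<open>i \<noteq> 0\<close> unfolding i_def by auto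
  ultimately show "t \<in> (\<Union>i\<in>{1..M}. {\<rho> (i - 1) + h..<\<rho> i})"
    using outside[of i] outside[of "i - 1"] assms(1) by (intro UN_I[of i]) fastforce+
next
  assume "t \<in> (\<Union>i\<in>{1..M}. {\<rho> (i - 1) + h..<\<rho> i})"
  then obtain i where i: "1 \<le> i" "i \<le> M" "\<rho> (i - 1) + h \<le> t" "t < \<rho> i"
    by auto
  have "\<rho> k \<notin> {t - h<..t}" if "k \<le> M" for k
  proof (cases "k \<le> i - 1")
    case True
    then have "\<rho> k \<le> \<rho> (i - 1)" using i by (intro increasing_mono) auto
    then show ?thesis using i by auto
  next
    case False
    then have "\<rho> i \<le> \<rho> k" using that by (intro increasing_mono) auto
    then show ?thesis using i by auto
  qed
  then show "{t - h<..t} \<inter> \<rho> ` {0..M} = {}"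
    by auto
qed

lemma window_disjoint_set_eq_gaps:
  assumes "0 < h"
  shows "{t \<in> {\<rho> 0<..\<rho> M}. {t - h<..t} \<inter> \<rho> ` {0..M} = {}}
    = (\<Union>i\<in>{1..M}. {\<rho> (i - 1) + h..<\<rho> i})"
proof (intro set_eqI iffI)
  fix t assume "t \<in> {t \<in> {\<rho> 0<..\<rho> M}. {t - h<..t} \<inter> \<rho> ` {0..M} = {}}"
  then show "t \<in> (\<Union>i\<in>{1..M}. {\<rho> (i - 1) + h..<\<rho> i})"
    using window_disjoint_iff_in_gap[OF assms] by auto
next
  fix t assume gap: "t \<in> (\<Union>i\<in>{1..M}. {\<rho> (i - 1) + h..<\<rho> i})"
  then have "\<rho> 0 < t" "t \<le> \<rho> M" using subsetD[OF gaps_subset gap] assms by auto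
  then show "t \<in> {t \<in> {\<rho> 0<..\<rho> M}. {t - h<..t} \<inter> \<rho> ` {0..M} = {}}"
    using window_disjoint_iff_in_gap[OF assms] gap by auto
qed

lemma card_grid_gaps:
  fixes n :: nat
  assumes "0 < n" "0 \<le> \<rho> 0"
  shows "real (card ((\<lambda>j. real j / n) -` (\<Union>i\<in>{1..M}. {\<rho> (i - 1) + 1/n..<\<rho> i})))
    = n * measure lebesgue (\<Union>i\<in>{1..M}. {\<rho> (i - 1) + 1/n..<\<rho> i})
      + (\<Sum>i\<in>{i \<in> {1..M}. \<rho> i - \<rho> (i - 1) \<ge> 1/n}.
           frac (- (n * \<rho> i)) - frac (- (n * \<rho> (i - 1))))"
proof -
  define G where "G i = {\<rho> (i - 1) + 1/n..<\<rho> i}" for i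
  define grid where "grid j = real j / n" for j :: nat
  have disjoint: "disjoint_family_on G {1..M}"
    unfolding G_def by (rule gaps_disjoint) simp
  have per_gap: "real (card (grid -` G i)) = n * measure lebesgue (G i)
      + (if 1/n \<le> \<rho> i - \<rho> (i - 1) then frac (- (n * \<rho> i)) - frac (- (n * \<rho> (i - 1))) else 0)"
    and finite: "finite (grid -` G i)" if "i \<in> {1..M}" for i
  proof -
    have "\<rho> 0 \<le> \<rho> (i - 1)" using that by (intro increasing_mono) auto
    with assms(2) have "0 \<le> \<rho> (i - 1)" by simp
    then show "real (card (grid -` G i)) = n * measure lebesgue (G i)
      + (if 1/n \<le> \<rho> i - \<rho> (i - 1) then frac (- (n * \<rho> i)) - frac (- (n * \<rho> (i - 1))) else 0)"
      and "finite (grid -` G i)"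
      using card_grid_Ico[OF assms(1)] grid_vimage_Ico[OF assms(1)] unfolding G_def grid_def by simp_all
  qed
  have "card (grid -` (\<Union>i\<in>{1..M}. G i)) = (\<Sum>i\<in>{1..M}. card (grid -` G i))"
    unfolding vimage_UN
    by (rule card_UN_disjoint'[OF disjoint_family_on_vimageI[OF disjoint]]) (use finite in auto)
  then have "real (card (grid -` (\<Union>i\<in>{1..M}. G i)))
      = (\<Sum>i\<in>{1..M}. n * measure lebesgue (G i)
          + (if 1/n \<le> \<rho> i - \<rho> (i - 1) then frac (- (n * \<rho> i)) - frac (- (n * \<rho> (i - 1))) else 0))"
    using per_gap by simp
  moreover have "measure lebesgue (\<Union>i\<in>{1..M}. G i) = (\<Sum>i\<in>{1..M}. measure lebesgue (G i))"
  proof (rule measure_finite_Union[OF _ _ disjoint])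
    show "emeasure lebesgue (G i) \<noteq> \<infinity>" for i
      unfolding G_def by (rule emeasure_lebesgue_Ico_finite)
  qed (auto simp: G_def)
  ultimately show ?thesis
    unfolding G_def[symmetric] grid_def[symmetric] sum.inter_filter[OF finite_atLeastAtMost]
    by (simp add: sum.distrib sum_distrib_left)
qed

end

lemma grid_windows_eq_vimage:
  fixes N :: nat and F :: "real set"
  assumes "0 < N"
  shows "{j \<in> {1..N}. {(real j - 1) / N<..real j / N} \<inter> F = {}}
    = (\<lambda>j. real j / N) -` {t \<in> {0<..1}. {t - 1/N<..t} \<inter> F = {}}"
proof -
  have "j \<in> {1..N} \<longleftrightarrow> real j / N \<in> {0<..1}" for j
    using assms by (auto simp: divide_le_eq_1 zero_less_divide_iff)
  moreover have "{(real j - 1) / N<..real j / N} = {real j / N - 1/N<..real j / N}" for j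
    by (simp add: diff_divide_distrib)
  ultimately show ?thesis by auto
qed

theorem proposition4:
  fixes M N :: nat and \<rho> :: "nat \<Rightarrow> real" and F X :: "real set"
  assumes "M \<ge> 1" and "N \<ge> 1"
    and "\<rho> 0 = 0" and "\<rho> M = 1"
    and "\<forall>i<M. \<rho> i < \<rho> (Suc i)"
    and "F = \<rho> ` {0..M}"
    and "X = {t \<in> {0<..1}. {t - 1 / real N<..t} \<inter> F = {}}"
  shows "real (card {j \<in> {1..N}. {(real j - 1) / real N<..real j / real N} \<inter> F = {}})
           = real N * measure lebesgue X
             + (\<Sum>i\<in>{i \<in> {1..M}. \<rho> i - \<rho> (i - 1) \<ge> 1 / real N}.
                  frac (- (real N * \<rho> i)) - frac (- (real N * \<rho> (i - 1))))"
proof -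
  have N: "0 < N" using assms(2) by simp
  have X_eq: "X = (\<Union>i\<in>{1..M}. {\<rho> (i - 1) + 1 / real N..<\<rho> i})"
    using window_disjoint_set_eq_gaps[OF assms(5), of "1 / real N"] N assms(3,4,6,7) by simp
  have "{j \<in> {1..N}. {(real j - 1) / real N<..real j / real N} \<inter> F = {}}
      = (\<lambda>j. real j / N) -` X"
    using grid_windows_eq_vimage[OF N] assms(7) by simp
  then show ?thesis
    using card_grid_gaps[OF assms(5) N] assms(3) unfolding X_eq by simp
qed

end
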